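(* Let $x\in\Pi[N]$, $h=H(x)$, and for $\mu\in\{0,1\}$ and $l\in\mathbb Z$ let $y^{\mu}[l]=\langle x,\psi_{[1],\mu}[\cdot-2l]\rangle$, $c^{\mu}[l]=\langle x,\varphi_{[1],\mu}[\cdot-2l]\rangle$ (both $N/2$-periodic in $l$), and $z^{\mu}_{\pm}=y^{\mu}\mp i\,c^{\mu}$. For an $N/2$-periodic sequence $v$ write $\hat v[n]_1=\sum_{l=0}^{N/2-1}v[l]\,\omega^{-2ln}$. Then for every $n\in\{0,\dots,N/2-1\}$: (i) $\begin{pmatrix}\hat z^{0}_{\pm}[n]_1\\ \hat z^{1}_{\pm}[n]_1\end{pmatrix}=\tfrac12\,\overline{\tilde M^{q}_{\pm}[n]}\begin{pmatrix}\hat x[n]\\ \hat x[n+N/2]\end{pmatrix}$, where the bar denotes entrywise complex conjugation; (ii) $M^{q}_{\pm}[n]\begin{pmatrix}\hat z^{0}_{\pm}[n]_1\\ \hat z^{1}_{\pm}[n]_1\end{pmatrix}=2\begin{pmatrix}\hat x[n]\pm i\,\hat h[n]\\ \hat x[n+N/2]\pm i\,\hat h[n+N/2]\end{pmatrix}$. In particular, applying the analysis filter bank with modulation matrix $\tilde M^q_{\pm}$ followed by the synthesis filter bank with modulation matrix $M^q_{\pm}$ to $x$ yields $2(x\pm iH(x))$, twice the analytic signal of $x$.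
   Context: Let $N=2^{J}$ with $J\ge 1$ an integer and $\omega=e^{2\pi i/N}$. $\Pi[N]$ denotes the real vector space of real-valued $N$-periodic sequences $x=\{x[k]\}_{k\in\mathbb Z}$, with inner product $\langle x,y\rangle=\sum_{k=0}^{N-1}x[k]y[k]$. The DFT of an $N$-periodic sequence is $\hat x[n]=\sum_{k=0}^{N-1}x[k]\omega^{-kn}$, with inverse $x[k]=\frac1N\sum_{n=0}^{N-1}\hat x[n]\omega^{kn}$. For $x\in\Pi[N]$, its discrete periodic Hilbert transform $H(x)\in\Pi[N]$ has DFT $\widehat{H(x)}[n]=-i\hat x[n]$ for $0<n<N/2$, $=i\hat x[n]$ for $N/2<n<N$, and $=0$ for $n\in\{0,N/2\}$ (indices mod $N$). Fix an integer $r\ge1$; let $U[n]=\tfrac12\big(\cos^{4r}\tfrac{\pi n}{N}+\sin^{4r}\tfrac{\pi n}{N}\big)$, $\beta[n]=\cos^{2r}\tfrac{\pi n}{N}/\sqrt{U[n]}$, $\alpha[n]=\omega^{n}\sin^{2r}\tfrac{\pi n}{N}/\sqrt{U[n]}$. The first-level wavelet packets $\psi_{[1],0},\psi_{[1],1}\in\Pi[N]$ have DFTs $\hat\psi_{[1],0}=\beta$, $\hat\psi_{[1],1}=\alpha$; the complementary wavelet packets $\varphi_{[1],\mu}\in\Pi[N]$ have DFT $\hat\varphi_{[1],\mu}[n]=-i\hat\psi_{[1],\mu}[n]$ for $0<n<N/2$, $=i\hat\psi_{[1],\mu}[n]$ for $N/2<n<N$, $=\hat\psi_{[1],\mu}[n]$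 for $n\in\{0,N/2\}$. Write $\hat g^{\mu}=\hat\varphi_{[1],\mu}$. Modulation matrices: $\tilde M[n]=\begin{pmatrix}\beta[n]&\beta[n+N/2]\\ \alpha[n]&\alpha[n+N/2]\end{pmatrix}$, $M[n]=\tilde M[n]^{T}$; $\tilde M^{c}[n]=\begin{pmatrix}\hat g^{0}[n]&\hat g^{0}[n+N/2]\\ \hat g^{1}[n]&\hat g^{1}[n+N/2]\end{pmatrix}$, $M^{c}[n]=\tilde M^{c}[n]^{T}$; and $\tilde M^{q}_{\pm}[n]=\tilde M[n]\pm i\,\tilde M^{c}[n]$, $M^{q}_{\pm}[n]=M[n]\pm i\,M^{c}[n]$. *)

theory Defs
  imports "HOL-Analysis.Analysis"
begin

text \<open>Powers of omega = exp(2 pi i / N): om N m = omega^m, for integer m.\<close>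
definition om :: "nat \<Rightarrow> int \<Rightarrow> complex" where
  "om N m = cis (2 * pi * of_int m / real N)"

definition periodic_seq :: "nat \<Rightarrow> (int \<Rightarrow> real) \<Rightarrow> bool" where
  "periodic_seq N x \<longleftrightarrow> (\<forall>k. x (k + int N) = x k)"

definition dft :: "nat \<Rightarrow> (int \<Rightarrow> complex) \<Rightarrow> int \<Rightarrow> complex" where
  "dft N x n = (\<Sum>k=0..<int N. x k * om N (- k * n))"

definition idft :: "nat \<Rightarrow> (int \<Rightarrow> complex) \<Rightarrow> int \<Rightarrow> complex" where
  "idft N X k = (1 / of_nat N) * (\<Sum>n=0..<int N. X n * om N (k * n))"

definition inner_N :: "nat \<Rightarrow> (int \<Rightarrow> real) \<Rightarrow> (int \<Rightarrow> real) \<Rightarrow> real" where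
  "inner_N N x y = (\<Sum>k=0..<int N. x k * y k)"

definition hilb_mult :: "nat \<Rightarrow> int \<Rightarrow> complex" where
  "hilb_mult N n = (let m = n mod int N in
     if 0 < m \<and> m < int N div 2 then - \<i>
     else if int N div 2 < m then \<i> else 0)"

definition comp_mult :: "nat \<Rightarrow> int \<Rightarrow> complex" where
  "comp_mult N n = (let m = n mod int N in
     if 0 < m \<and> m < int N div 2 then - \<i>
     else if int N div 2 < m then \<i> else 1)"

text \<open>Discrete periodic Hilbert transform (its values are real; Re only fixes the type).\<close>
definition hilbert :: "nat \<Rightarrow> (int \<Rightarrow> real) \<Rightarrow> int \<Rightarrow> real" where
  "hilbert N x k = Re (idft N (\<lambda>n. hilb_mult N n * dft N (\<lambda>j. of_real (x j)) n) k)"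

definition U :: "nat \<Rightarrow> nat \<Rightarrow> int \<Rightarrow> real" where
  "U N r n = (cos (pi * of_int n / real N) ^ (4 * r) + sin (pi * of_int n / real N) ^ (4 * r)) / 2"

definition beta :: "nat \<Rightarrow> nat \<Rightarrow> int \<Rightarrow> complex" where
  "beta N r n = of_real (cos (pi * of_int n / real N) ^ (2 * r) / sqrt (U N r n))"

definition alpha :: "nat \<Rightarrow> nat \<Rightarrow> int \<Rightarrow> complex" where
  "alpha N r n = om N n * of_real (sin (pi * of_int n / real N) ^ (2 * r) / sqrt (U N r n))"

definition psi_hat :: "nat \<Rightarrow> nat \<Rightarrow> nat \<Rightarrow> int \<Rightarrow> complex" where
  "psi_hat N r \<mu> n = (if \<mu> = 0 then beta N r n else alpha N r n)"

definition g_hat :: "nat \<Rightarrow> nat \<Rightarrow> nat \<Rightarrow> int \<Rightarrow> complex" where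
  "g_hat N r \<mu> n = comp_mult N n * psi_hat N r \<mu> n"

text \<open>The wavelet packets themselves (real sequences; Re only fixes the type).\<close>
definition psi :: "nat \<Rightarrow> nat \<Rightarrow> nat \<Rightarrow> int \<Rightarrow> real" where
  "psi N r \<mu> k = Re (idft N (psi_hat N r \<mu>) k)"

definition phi :: "nat \<Rightarrow> nat \<Rightarrow> nat \<Rightarrow> int \<Rightarrow> real" where
  "phi N r \<mu> k = Re (idft N (g_hat N r \<mu>) k)"

text \<open>Modulation matrices, entries indexed by i,j in {0,1}:
  Mt N r n i j = tilde M[n]_(i,j), Mtc = tilde M^c, Mq s = tilde M^q_{+/-} for s = +1/-1,
  and the untilded matrices are transposes.\<close>
definition Mt :: "nat \<Rightarrow> nat \<Rightarrow> int \<Rightarrow> nat \<Rightarrow> nat \<Rightarrow> complex" where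
  "Mt N r n i j = psi_hat N r i (n + int j * (int N div 2))"

definition Mtc :: "nat \<Rightarrow> nat \<Rightarrow> int \<Rightarrow> nat \<Rightarrow> nat \<Rightarrow> complex" where
  "Mtc N r n i j = g_hat N r i (n + int j * (int N div 2))"

definition Mtq :: "nat \<Rightarrow> nat \<Rightarrow> real \<Rightarrow> int \<Rightarrow> nat \<Rightarrow> nat \<Rightarrow> complex" where
  "Mtq N r s n i j = Mt N r n i j + of_real s * \<i> * Mtc N r n i j"

definition Mq :: "nat \<Rightarrow> nat \<Rightarrow> real \<Rightarrow> int \<Rightarrow> nat \<Rightarrow> nat \<Rightarrow> complex" where
  "Mq N r s n i j = Mtq N r s n j i"

text \<open>Coefficients y^mu[l], c^mu[l] and z^mu_{+/-} = y^mu -/+ i c^mu (sign s = +1/-1).\<close>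
definition ycoef :: "nat \<Rightarrow> nat \<Rightarrow> (int \<Rightarrow> real) \<Rightarrow> nat \<Rightarrow> int \<Rightarrow> real" where
  "ycoef N r x \<mu> l = inner_N N x (\<lambda>k. psi N r \<mu> (k - 2 * l))"

definition ccoef :: "nat \<Rightarrow> nat \<Rightarrow> (int \<Rightarrow> real) \<Rightarrow> nat \<Rightarrow> int \<Rightarrow> real" where
  "ccoef N r x \<mu> l = inner_N N x (\<lambda>k. phi N r \<mu> (k - 2 * l))"

definition zcoef :: "nat \<Rightarrow> nat \<Rightarrow> real \<Rightarrow> (int \<Rightarrow> real) \<Rightarrow> nat \<Rightarrow> int \<Rightarrow> complex" where
  "zcoef N r s x \<mu> l = of_real (ycoef N r x \<mu> l) - of_real s * \<i> * of_real (ccoef N r x \<mu> l)"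

definition dft1 :: "nat \<Rightarrow> (int \<Rightarrow> complex) \<Rightarrow> int \<Rightarrow> complex" where
  "dft1 N v n = (\<Sum>l=0..<int N div 2. v l * om N (- 2 * l * n))"

end

theory Submission
  imports Defs
begin

text \<open>Correlating with a real filter whose DFT is \<open>F\<close> multiplies \<open>x\<close>-hat by \<open>cnj F\<close>,
  and sampling at even shifts folds the frequencies \<open>n\<close> and \<open>n + N/2\<close> together; this gives (i).
  For (ii), the rows \<open>(\<beta>, \<alpha>)\<close> of the modulation matrix are orthogonal with squared norm 2
  (because \<open>cos\<^sup>4\<^sup>r + sin\<^sup>4\<^sup>r = 2 U\<close>), so synthesis after analysis multiplies \<open>x\<close>-hat by
  \<open>|1 \<plusminus> i c|\<^sup>2\<close>, where \<open>c\<close> is the complementary multiplier; and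
  \<open>|1 \<plusminus> i c|\<^sup>2 = 2 (1 \<plusminus> i h)\<close> with \<open>h\<close> the Hilbert multiplier.\<close>

lemma om_add: "om P (a + b) = om P a * om P b"
  unfolding om_def by (simp add: cis_mult add_divide_distrib distrib_left)

lemma om_zero [simp]: "om P 0 = 1"
  unfolding om_def by simp

lemma om_cnj: "cnj (om P a) = om P (- a)"
  unfolding om_def by (simp add: cis_cnj)

lemma om_mult_cnj: "om P a * cnj (om P a) = 1"
  by (simp add: om_cnj flip: om_add)

lemma om_period: "om P (int P * k) = 1"
  unfolding om_def by (cases "P = 0") (simp_all add: mult.assoc[symmetric])

lemma om_periodic: "om P (a + int P * k) = om P a"
  by (simp add: om_add om_period)

lemma om_shift_period: "om P (j * (n + int P)) = om P (j * n)"
  using om_periodic[of P "j * n" j] by (simp add: algebra_simps)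

lemma om_half_period: "M > 0 \<Longrightarrow> om (2 * M) (int M) = -1"
  unfolding om_def by simp

lemma om_double: "om (2 * M) (2 * a) = om M a"
  unfolding om_def by (simp add: field_simps)

lemma om_power: "om P d ^ k = om P (int k * d)"
  by (induct k) (simp_all add: om_add distrib_right)

lemma om_eq_1_imp_dvd:
  assumes "P > 0" "om P d = 1"
  shows "int P dvd d"
proof -
  have "exp (\<i> * complex_of_real (2 * pi * of_int d / real P)) = 1"
    using assms(2) unfolding om_def by (simp add: cis_conv_exp)
  then obtain n :: int where "2 * pi * of_int d / real P = of_int (2 * n) * pi"
    by (auto simp: exp_eq_1)
  then have "real_of_int d = real_of_int (int P * n)"
    using assms(1) by (simp add: field_simps)
  then show ?thesis by (simp only: of_int_eq_iff dvd_triv_left)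
qed

lemma sum_int_atLeastLessThan_nat: "(\<Sum>k=0..<int P. f k) = (\<Sum>k<P. f (int k))"
proof -
  have "{0..<int P} = int ` {0..<P}" by (simp add: image_int_atLeastLessThan)
  then show ?thesis by (simp add: sum.reindex lessThan_atLeast0)
qed

lemma sum_om_orthogonality:
  assumes "P > 0"
  shows "(\<Sum>k=0..<int P. om P (k * d)) = (if int P dvd d then of_nat P else 0)"
proof (cases "int P dvd d")
  case True
  then obtain q where "d = int P * q" by auto
  then have "om P (k * d) = 1" for k
    using om_period[of P "k * q"] by (simp add: mult.left_commute)
  then show ?thesis using True by simp
next
  case False
  have ne: "om P d \<noteq> 1" using om_eq_1_imp_dvd[OF assms] False by blast
  have "(\<Sum>k=0..<int P. om P (k * d)) = (\<Sum>k<P. om P d ^ k)"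
    by (simp add: sum_int_atLeastLessThan_nat om_power)
  also have "\<dots> = (1 - om P d ^ P) / (1 - om P d)"
    using ne by (simp add: sum_gp_strict)
  also have "om P d ^ P = 1" by (simp add: om_power om_period)
  finally show ?thesis using False by simp
qed

definition periodic :: "nat \<Rightarrow> (int \<Rightarrow> 'a) \<Rightarrow> bool" where
  "periodic P F \<longleftrightarrow> (\<forall>n. F (n + int P) = F n)"

definition hermitian :: "(int \<Rightarrow> complex) \<Rightarrow> bool" where
  "hermitian F \<longleftrightarrow> (\<forall>n. F (- n) = cnj (F n))"

lemma periodic_add_mult:
  assumes "periodic P F"
  shows "F (n + int P * m) = F n"
proof (induct m arbitrary: n rule: int_induct[where k = 0])
  case (step1 i)
  then show ?case using assms unfolding periodic_def
    by (metis add.assoc distrib_left mult.right_neutral)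
next
  case (step2 i)
  have "F (n + int P * (i - 1)) = F (n + int P * (i - 1) + int P)"
    using assms unfolding periodic_def by simp
  also have "\<dots> = F (n + int P * i)" by (simp add: algebra_simps)
  finally show ?case using step2 by simp
qed simp

lemma periodic_mod:
  assumes "periodic P F"
  shows "F (n mod int P) = F n"
  using periodic_add_mult[OF assms, of "n mod int P" "n div int P"] by simp

lemma sum_periodic_shift:
  assumes "periodic P F"
  shows "(\<Sum>n=0..<int P. F (n + a)) = (\<Sum>n=0..<int P. F n)"
  by (rule sum.reindex_bij_witness[where i = "\<lambda>n. (n - a) mod int P" and j = "\<lambda>n. (n + a) mod int P"])
     (auto simp: mod_diff_left_eq mod_add_left_eq periodic_mod[OF assms])

lemma sum_periodic_reflect:
  assumes "periodic P F"
  shows "(\<Sum>n=0..<int P. F (- n)) = (\<Sum>n=0..<int P. F n)"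
  by (rule sum.reindex_bij_witness[where i = "\<lambda>n. (- n) mod int P" and j = "\<lambda>n. (- n) mod int P"])
     (auto simp: mod_minus_eq periodic_mod[OF assms])

lemma multiples_in_period:
  assumes "Q > 0"
  shows "{m \<in> {0..<int (k * Q)}. int Q dvd m} = (\<lambda>q. int Q * int q) ` {..<k}"
proof (intro equalityI subsetI)
  fix m assume "m \<in> {m \<in> {0..<int (k * Q)}. int Q dvd m}"
  then have "0 \<le> m" "m < int Q * int k" "int Q dvd m" by (auto simp: mult.commute)
  then obtain t where m: "m = int Q * t" "0 \<le> int Q * t" "int Q * t < int Q * int k"
    by (auto elim!: dvdE)
  then have "0 \<le> t" "t < int k" using assms
    by (auto simp: zero_le_mult_iff mult_less_cancel_left)
  then show "m \<in> (\<lambda>q. int Q * int q) ` {..<k}"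
    using m(1) by (intro image_eqI[where x = "nat t"]) auto
qed (use assms in \<open>auto simp: mult.commute\<close>)

lemma sum_periodic_congruent:
  assumes "periodic (k * Q) G" "Q > 0"
  shows "(\<Sum>m=0..<int (k * Q). if int Q dvd (m - a) then G m else 0)
       = (\<Sum>q<k. G (a + int Q * int q))"
proof -
  let ?H = "\<lambda>m. if int Q dvd (m - a) then G m else 0"
  have "periodic (k * Q) ?H"
  proof (unfold periodic_def, intro allI)
    fix n
    have e: "n + int (k * Q) - a = (n - a) + int k * int Q" by simp
    show "?H (n + int (k * Q)) = ?H n"
      using assms(1) unfolding periodic_def by (simp only: e dvd_add_times_triv_right_iff)
  qed
  then have "(\<Sum>m=0..<int (k * Q). ?H m) = (\<Sum>m=0..<int (k * Q). ?H (m + a))"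
    by (rule sum_periodic_shift[symmetric])
  also have "\<dots> = (\<Sum>m\<in>{m\<in>{0..<int (k * Q)}. int Q dvd m}. G (m + a))"
    unfolding sum.inter_filter[OF finite_atLeastLessThan_int] by simp
  also have "\<dots> = (\<Sum>q<k. G (a + int Q * int q))"
    unfolding multiples_in_period[OF assms(2)]
    using assms(2) by (subst sum.reindex) (auto simp: inj_on_def add.commute)
  finally show ?thesis .
qed

lemma cnj_idft: "cnj (idft N F j) = idft N (\<lambda>m. cnj (F m)) (- j)"
  unfolding idft_def by (simp add: om_cnj)

lemma idft_reflect:
  assumes "periodic N F"
  shows "idft N (\<lambda>m. F (- m)) (- j) = idft N F j"
proof -
  have "periodic N (\<lambda>m. F m * om N (j * m))"
    using assms unfolding periodic_def by (simp add: om_shift_period)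
  from sum_periodic_reflect[OF this] show ?thesis
    unfolding idft_def by simp
qed

lemma idft_real:
  assumes "periodic N F" "hermitian F"
  shows "complex_of_real (Re (idft N F j)) = idft N F j"
proof -
  have "cnj (idft N F j) = idft N (\<lambda>m. F (- m)) (- j)"
    using assms(2) unfolding cnj_idft hermitian_def by simp
  then have "cnj (idft N F j) = idft N F j"
    using idft_reflect[OF assms(1)] by simp
  then show ?thesis by (simp add: complex_eq_iff)
qed

lemma dft_periodic: "periodic N (dft N y)"
  unfolding periodic_def dft_def by (intro allI sum.cong refl) (simp only: om_shift_period)

lemma dft_real_hermitian: "hermitian (dft N (\<lambda>k. complex_of_real (y k)))"
  unfolding hermitian_def dft_def by (simp add: om_cnj)

lemma dft_idft:
  assumes "periodic N Y" "N > 0"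
  shows "dft N (idft N Y) m = Y m"
proof -
  have "dft N (idft N Y) m = (1 / of_nat N) * (\<Sum>k=0..<int N. \<Sum>j=0..<int N. Y j * om N (k * (j - m)))"
    unfolding dft_def idft_def
    by (simp add: sum_distrib_left sum_distrib_right mult_ac algebra_simps flip: om_add)
  also have "\<dots> = (1 / of_nat N) * (\<Sum>j=0..<int N. Y j * (\<Sum>k=0..<int N. om N (k * (j - m))))"
    by (subst sum.swap) (simp add: sum_distrib_left)
  also have "\<dots> = (\<Sum>j=0..<int (1 * N). if int N dvd (j - m) then Y j else 0)"
    using assms(2) by (simp add: sum_om_orthogonality sum_distrib_left if_distrib cong: if_cong)
  also have "\<dots> = Y m"
    using sum_periodic_congruent[of 1 N Y m] assms by simp
  finally show ?thesis .
qed

lemma inner_N_translate_eq_idft: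
  fixes x :: "int \<Rightarrow> real"
  assumes "periodic N F" "hermitian F"
  shows "complex_of_real (inner_N N x (\<lambda>k. Re (idft N F (k - a))))
       = idft N (\<lambda>m. cnj (F m) * dft N (\<lambda>k. complex_of_real (x k)) m) a"
proof -
  have filter: "complex_of_real (Re (idft N F (k - a)))
      = (1 / of_nat N) * (\<Sum>m=0..<int N. cnj (F m) * om N (a * m) * om N (- k * m))" for k
  proof -
    have "complex_of_real (Re (idft N F (k - a))) = cnj (idft N F (k - a))"
      using idft_real[OF assms] by (metis complex_cnj_complex_of_real)
    also have "\<dots> = idft N (\<lambda>m. cnj (F m)) (a - k)"
      unfolding cnj_idft by simp
    finally show ?thesis
      unfolding idft_def by (simp add: algebra_simps flip: om_add)
  qed
  have "complex_of_real (inner_N N x (\<lambda>k. Re (idft N F (k - a))))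
      = (\<Sum>k=0..<int N. complex_of_real (x k) * complex_of_real (Re (idft N F (k - a))))"
    unfolding inner_N_def by simp
  also have "\<dots> = (1 / of_nat N) * (\<Sum>k=0..<int N. \<Sum>m=0..<int N.
      cnj (F m) * om N (a * m) * (complex_of_real (x k) * om N (- k * m)))"
    unfolding filter by (simp add: sum_distrib_left mult_ac)
  also have "\<dots> = (1 / of_nat N)
      * (\<Sum>m=0..<int N. cnj (F m) * om N (a * m) * (\<Sum>k=0..<int N. complex_of_real (x k) * om N (- k * m)))"
    by (subst sum.swap) (simp add: sum_distrib_left)
  finally show ?thesis
    unfolding idft_def dft_def by (simp add: mult_ac)
qed

lemma dft1_downsample:
  assumes "periodic N G" "N = 2 * M" "M > 0"
  shows "dft1 N (\<lambda>l. idft N G (2 * l)) n = (G n + G (n + int M)) / 2"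
proof -
  have half: "int N div 2 = int M" using assms(2) by simp
  have fold: "om N (2 * l * m) * om N (- 2 * l * n) = om M (l * (m - n))" for l m
    using om_double[of M "l * (m - n)"] assms(2) by (simp add: algebra_simps flip: om_add)
  have "dft1 N (\<lambda>l. idft N G (2 * l)) n
      = (1 / of_nat N) * (\<Sum>l=0..<int M. \<Sum>m=0..<int N. G m * (om N (2 * l * m) * om N (- 2 * l * n)))"
    unfolding dft1_def idft_def half by (simp add: sum_distrib_left sum_distrib_right mult_ac)
  also have "\<dots> = (1 / of_nat N) * (\<Sum>m=0..<int N. G m * (\<Sum>l=0..<int M. om M (l * (m - n))))"
    unfolding fold by (subst sum.swap) (simp add: sum_distrib_left)
  also have "\<dots> = (1 / 2) * (\<Sum>m=0..<int (2 * M). if int M dvd (m - n) then G m else 0)"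
    using assms(2,3) by (simp add: sum_om_orthogonality sum_distrib_left if_distrib cong: if_cong)
  also have "\<dots> = (G n + G (n + int M)) / 2"
    using sum_periodic_congruent[of 2 M G n] assms by (simp add: numeral_2_eq_2)
  finally show ?thesis .
qed

lemma U_pos: "U N r n > 0"
proof -
  let ?c = "cos (pi * of_int n / real N)" and ?s = "sin (pi * of_int n / real N)"
  have "?c \<noteq> 0 \<or> ?s \<noteq> 0"
    by (metis sin_zero_abs_cos_one abs_zero zero_neq_one)
  then have "?c ^ (4 * r) > 0 \<or> ?s ^ (4 * r) > 0"
    by (simp add: zero_less_power_eq)
  moreover have "?c ^ (4 * r) \<ge> 0" "?s ^ (4 * r) \<ge> 0"
    by (simp_all add: zero_le_power_eq)
  ultimately have "?c ^ (4 * r) + ?s ^ (4 * r) > 0" by linarith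
  then show ?thesis unfolding U_def by simp
qed

lemma comp_mult_periodic: "periodic N (comp_mult N)"
  unfolding periodic_def comp_mult_def by simp

lemma hilb_mult_periodic: "periodic N (hilb_mult N)"
  unfolding periodic_def hilb_mult_def by simp

lemma comp_mult_square:
  assumes "s = 1 \<or> s = -1"
  shows "(1 + of_real s * \<i> * comp_mult N n) * cnj (1 + of_real s * \<i> * comp_mult N n)
       = 2 * (1 + of_real s * \<i> * hilb_mult N n)"
  using assms unfolding comp_mult_def hilb_mult_def Let_def by (auto simp: algebra_simps)

lemma Mtq_factor:
  "Mtq N r s n i j = (1 + of_real s * \<i> * comp_mult N (n + int j * (int N div 2)))
                    * psi_hat N r i (n + int j * (int N div 2))"
  unfolding Mtq_def Mt_def Mtc_def g_hat_def by (simp add: algebra_simps)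

lemma paraunitary_synthesis:
  fixes P :: "'j \<Rightarrow> 'k \<Rightarrow> complex" and A X :: "'k \<Rightarrow> complex"
  assumes "finite I" "finite K" "\<mu> \<in> K"
    and "\<And>\<nu>. \<nu> \<in> K \<Longrightarrow> (\<Sum>j\<in>I. P j \<mu> * cnj (P j \<nu>)) = (if \<mu> = \<nu> then c else 0)"
  shows "(\<Sum>j\<in>I. A \<mu> * P j \<mu> * ((1 / 2) * (\<Sum>\<nu>\<in>K. cnj (A \<nu> * P j \<nu>) * X \<nu>)))
       = c / 2 * (A \<mu> * cnj (A \<mu>) * X \<mu>)"
proof -
  have "(\<Sum>j\<in>I. A \<mu> * P j \<mu> * ((1 / 2) * (\<Sum>\<nu>\<in>K. cnj (A \<nu> * P j \<nu>) * X \<nu>)))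
      = (1 / 2) * (\<Sum>j\<in>I. \<Sum>\<nu>\<in>K. A \<mu> * cnj (A \<nu>) * X \<nu> * (P j \<mu> * cnj (P j \<nu>)))"
    by (simp add: sum_distrib_left mult_ac)
  also have "\<dots> = (1 / 2) * (\<Sum>\<nu>\<in>K. A \<mu> * cnj (A \<nu>) * X \<nu> * (\<Sum>j\<in>I. P j \<mu> * cnj (P j \<nu>)))"
    by (subst sum.swap) (simp add: sum_distrib_left)
  also have "\<dots> = (1 / 2) * (\<Sum>\<nu>\<in>K. if \<mu> = \<nu> then c * (A \<mu> * cnj (A \<mu>) * X \<mu>) else 0)"
    using assms(4) by (intro arg_cong[where f = "(*) _"] sum.cong) auto
  also have "\<dots> = c / 2 * (A \<mu> * cnj (A \<mu>) * X \<mu>)"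
    using assms(2,3) by simp
  finally show ?thesis .
qed

context
  fixes N M :: nat
  assumes N_eq: "N = 2 * M" and M_pos: "M > 0"
begin

lemma half_period: "int N div 2 = int M"
  using N_eq by simp

lemma angle_shift_half: "pi * of_int (n + int M) / real N = pi * of_int n / real N + pi / 2"
  using N_eq M_pos by (simp add: field_simps)

lemma angle_shift_period: "pi * of_int (n + int N) / real N = pi * of_int n / real N + pi"
  using N_eq M_pos by (simp add: field_simps)

lemma U_shift_half: "U N r (n + int M) = U N r n"
  unfolding U_def angle_shift_half
  by (simp add: cos_add sin_add power_mult[of _ 2] add.commute)

lemma beta_periodic: "periodic N (beta N r)"
  unfolding periodic_def beta_def U_def angle_shift_period
  by (simp add: power_mult[of _ 2])

lemma beta_hermitian: "hermitian (beta N r)"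
  unfolding hermitian_def beta_def U_def
  by (simp add: power_mult[of _ 2])

lemma alpha_periodic: "periodic N (alpha N r)"
  unfolding periodic_def alpha_def U_def angle_shift_period
  using om_periodic[of N _ 1] by (simp add: power_mult[of _ 2])

lemma alpha_hermitian: "hermitian (alpha N r)"
  unfolding hermitian_def alpha_def U_def
  by (simp add: power_mult[of _ 2] om_cnj)

lemma beta_shift_half:
  "beta N r (n + int M) = of_real (sin (pi * of_int n / real N) ^ (2 * r) / sqrt (U N r n))"
  unfolding beta_def U_shift_half angle_shift_half by (simp add: cos_add)

lemma alpha_shift_half:
  "alpha N r (n + int M) = - om N n * of_real (cos (pi * of_int n / real N) ^ (2 * r) / sqrt (U N r n))"
proof -
  have "om N (n + int M) = - om N n"
    using om_half_period[OF M_pos] N_eq by (simp add: om_add)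
  then show ?thesis
    unfolding alpha_def U_shift_half angle_shift_half by (simp add: sin_add)
qed

lemma beta_alpha_norm: "beta N r n * cnj (beta N r n) + alpha N r n * cnj (alpha N r n) = 2"
proof -
  define u where "u = U N r n"
  define c where "c = cos (pi * of_int n / real N) ^ (2 * r) / sqrt u"
  define s where "s = sin (pi * of_int n / real N) ^ (2 * r) / sqrt u"
  have u: "u > 0" unfolding u_def by (rule U_pos)
  have "c ^ 2 + s ^ 2 = 2 * u / u"
    using u unfolding c_def s_def u_def U_def
    by (simp add: power_divide add_divide_distrib flip: power_mult)
  also have "\<dots> = 2" using u by simp
  finally have cs: "c ^ 2 + s ^ 2 = 2" .
  have "beta N r n = of_real c" "alpha N r n = om N n * of_real s"
    unfolding beta_def alpha_def c_def s_def u_def by simp_all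
  then have "beta N r n * cnj (beta N r n) + alpha N r n * cnj (alpha N r n)
      = of_real (c ^ 2) + om N n * cnj (om N n) * of_real (s ^ 2)"
    by (simp add: power2_eq_square mult_ac)
  also have "\<dots> = of_real (c ^ 2 + s ^ 2)" unfolding om_mult_cnj by simp
  finally show ?thesis unfolding cs by simp
qed

lemma beta_alpha_orthogonal:
  "beta N r n * cnj (beta N r (n + int M)) + alpha N r n * cnj (alpha N r (n + int M)) = 0"
proof -
  define c where "c = cos (pi * of_int n / real N) ^ (2 * r) / sqrt (U N r n)"
  define s where "s = sin (pi * of_int n / real N) ^ (2 * r) / sqrt (U N r n)"
  have "beta N r n = of_real c" "alpha N r n = om N n * of_real s"
    "beta N r (n + int M) = of_real s" "alpha N r (n + int M) = - om N n * of_real c"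
    unfolding beta_shift_half alpha_shift_half unfolding beta_def alpha_def c_def s_def by simp_all
  then have "beta N r n * cnj (beta N r (n + int M)) + alpha N r n * cnj (alpha N r (n + int M))
      = of_real (c * s) - om N n * cnj (om N n) * of_real (s * c)"
    by (simp add: algebra_simps)
  then show ?thesis unfolding om_mult_cnj by (simp add: mult.commute)
qed

lemma psi_hat_periodic: "periodic N (psi_hat N r \<mu>)"
  using beta_periodic alpha_periodic unfolding psi_hat_def periodic_def by simp

lemma psi_hat_hermitian: "hermitian (psi_hat N r \<mu>)"
  using beta_hermitian alpha_hermitian unfolding psi_hat_def hermitian_def by simp

lemma psi_hat_paraunitary:
  assumes "\<mu> \<in> {0, 1}" "\<nu> \<in> {0, 1}"
  shows "(\<Sum>j\<in>{0::nat, 1}. psi_hat N r j (n + int \<mu> * int M) * cnj (psi_hat N r j (n + int \<nu> * int M)))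
       = (if \<mu> = \<nu> then 2 else 0)"
proof -
  have "cnj (beta N r n * cnj (beta N r (n + int M)) + alpha N r n * cnj (alpha N r (n + int M))) = 0"
    by (simp only: beta_alpha_orthogonal complex_cnj_zero)
  then have "beta N r (n + int M) * cnj (beta N r n) + alpha N r (n + int M) * cnj (alpha N r n) = 0"
    by (simp add: mult.commute)
  then show ?thesis
    using assms beta_alpha_norm[of r n] beta_alpha_norm[of r "n + int M"] beta_alpha_orthogonal[of r n]
    by (auto simp: psi_hat_def)
qed

lemma comp_mult_hermitian: "hermitian (comp_mult N)"
  unfolding hermitian_def
proof
  fix n
  have "0 \<le> n mod int N" "n mod int N < int N" using N_eq M_pos by auto
  then show "comp_mult N (- n) = cnj (comp_mult N n)"
    unfolding comp_mult_def Let_def half_period zmod_zminus1_eq_if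
    using N_eq by auto
qed

lemma hilb_mult_hermitian: "hermitian (hilb_mult N)"
  unfolding hermitian_def
proof
  fix n
  have "0 \<le> n mod int N" "n mod int N < int N" using N_eq M_pos by auto
  then show "hilb_mult N (- n) = cnj (hilb_mult N n)"
    unfolding hilb_mult_def Let_def half_period zmod_zminus1_eq_if
    using N_eq by auto
qed

lemma g_hat_periodic: "periodic N (g_hat N r \<mu>)"
  using comp_mult_periodic psi_hat_periodic
  unfolding g_hat_def periodic_def by simp

lemma g_hat_hermitian: "hermitian (g_hat N r \<mu>)"
  using comp_mult_hermitian psi_hat_hermitian
  unfolding g_hat_def hermitian_def by simp

lemma dft_hilbert:
  "dft N (\<lambda>k. of_real (hilbert N x k)) m = hilb_mult N m * dft N (\<lambda>k. of_real (x k)) m"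
proof -
  let ?Y = "\<lambda>m. hilb_mult N m * dft N (\<lambda>k. of_real (x k)) m"
  have "periodic N ?Y"
    using hilb_mult_periodic dft_periodic unfolding periodic_def by simp
  moreover have "hermitian ?Y"
    using hilb_mult_hermitian dft_real_hermitian unfolding hermitian_def by simp
  ultimately show ?thesis
    unfolding hilbert_def using idft_real dft_idft N_eq M_pos by simp
qed

lemma dft1_filter_coefficients:
  fixes x :: "int \<Rightarrow> real"
  assumes "periodic N F" "hermitian F"
  defines "X \<equiv> dft N (\<lambda>k. of_real (x k))"
  shows "dft1 N (\<lambda>l. of_real (inner_N N x (\<lambda>k. Re (idft N F (k - 2 * l))))) n
       = (cnj (F n) * X n + cnj (F (n + int M)) * X (n + int M)) / 2"
proof -
  have "periodic N (\<lambda>m. cnj (F m) * X m)"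
    using assms(1) dft_periodic unfolding periodic_def X_def by simp
  then show ?thesis
    unfolding inner_N_translate_eq_idft[OF assms(1,2)] X_def
    by (rule dft1_downsample[OF _ N_eq M_pos])
qed

lemma analysis_bank:
  "dft1 N (zcoef N r s x \<mu>) n
     = (1 / 2) * (\<Sum>j\<in>{0, 1}. cnj (Mtq N r s n \<mu> j) * dft N (\<lambda>k. of_real (x k)) (n + int j * (int N div 2)))"
proof -
  let ?X = "dft N (\<lambda>k. of_real (x k))"
  have "dft1 N (zcoef N r s x \<mu>) n
      = dft1 N (\<lambda>l. of_real (ycoef N r x \<mu> l)) n - of_real s * \<i> * dft1 N (\<lambda>l. of_real (ccoef N r x \<mu> l)) n"
    unfolding dft1_def zcoef_def by (simp add: sum_subtractf sum_distrib_left algebra_simps)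
  also have "\<dots> = (cnj (psi_hat N r \<mu> n) * ?X n + cnj (psi_hat N r \<mu> (n + int M)) * ?X (n + int M)) / 2
      - of_real s * \<i> * ((cnj (g_hat N r \<mu> n) * ?X n + cnj (g_hat N r \<mu> (n + int M)) * ?X (n + int M)) / 2)"
    unfolding ycoef_def ccoef_def psi_def phi_def
      dft1_filter_coefficients[OF psi_hat_periodic psi_hat_hermitian]
      dft1_filter_coefficients[OF g_hat_periodic g_hat_hermitian] ..
  also have "\<dots> = (1 / 2) * (\<Sum>j\<in>{0, 1}. cnj (Mtq N r s n \<mu> j) * ?X (n + int j * (int N div 2)))"
    unfolding Mtq_def Mt_def Mtc_def half_period by (simp add: field_simps)
  finally show ?thesis .
qed

lemma synthesis_bank:
  assumes "s = 1 \<or> s = -1" "\<mu> \<in> {0, 1}"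
  shows "(\<Sum>j\<in>{0, 1}. Mq N r s n \<mu> j * dft1 N (zcoef N r s x j) n)
       = 2 * (dft N (\<lambda>k. of_real (x k)) (n + int \<mu> * (int N div 2))
              + of_real s * \<i> * dft N (\<lambda>k. of_real (hilbert N x k)) (n + int \<mu> * (int N div 2)))"
proof -
  define X where "X \<nu> = dft N (\<lambda>k. of_real (x k)) (n + int \<nu> * int M)" for \<nu> :: nat
  define A where "A \<nu> = 1 + of_real s * \<i> * comp_mult N (n + int \<nu> * int M)" for \<nu> :: nat
  define P where "P j \<nu> = psi_hat N r j (n + int \<nu> * int M)" for j \<nu> :: nat
  have "(\<Sum>j\<in>{0, 1}. Mq N r s n \<mu> j * dft1 N (zcoef N r s x j) n)
      = (\<Sum>j\<in>{0, 1}. A \<mu> * P j \<mu> * ((1 / 2) * (\<Sum>\<nu>\<in>{0, 1}. cnj (A \<nu> * P j \<nu>) * X \<nu>)))"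
    unfolding Mq_def analysis_bank Mtq_factor half_period A_def P_def X_def ..
  also have "\<dots> = A \<mu> * cnj (A \<mu>) * X \<mu>"
    using paraunitary_synthesis[of "{0, 1}" "{0, 1}" \<mu> P 2 A X] assms(2) psi_hat_paraunitary
    unfolding P_def by simp
  also have "\<dots> = 2 * (X \<mu> + of_real s * \<i> * (hilb_mult N (n + int \<mu> * int M) * X \<mu>))"
    unfolding A_def comp_mult_square[OF assms(1)] by (simp add: algebra_simps)
  finally show ?thesis
    unfolding dft_hilbert half_period X_def .
qed

end

theorem proposition4p2:
  fixes J r N :: nat and x :: "int \<Rightarrow> real" and s :: real
  assumes "J \<ge> 1" and "r \<ge> 1" and "N = 2 ^ J"
    and "periodic_seq N x"
    and "s = 1 \<or> s = -1"
  shows "\<forall>n \<in> {0..<int N div 2}.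
     (let X = (\<lambda>j::nat. dft N (\<lambda>k. of_real (x k)) (n + int j * (int N div 2)));
          Hh = (\<lambda>j::nat. dft N (\<lambda>k. of_real (hilbert N x k)) (n + int j * (int N div 2)));
          Z = (\<lambda>\<mu>. dft1 N (zcoef N r s x \<mu>) n)
      in (\<forall>\<mu>\<in>{0,1}. Z \<mu> = (1/2) * (\<Sum>j\<in>{0,1}. cnj (Mtq N r s n \<mu> j) * X j))
       \<and> (\<forall>\<mu>\<in>{0,1}. (\<Sum>j\<in>{0,1}. Mq N r s n \<mu> j * Z j)
                        = 2 * (X \<mu> + of_real s * \<i> * Hh \<mu>)))"
proof -
  define M :: nat where "M = 2 ^ (J - 1)"
  have N_eq: "N = 2 * M" and M_pos: "M > 0"
    using assms(1,3) unfolding M_def by (simp_all flip: power_Suc)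
  show ?thesis
    unfolding Let_def
    using analysis_bank[OF N_eq M_pos] synthesis_bank[OF N_eq M_pos assms(5)] by simp
qed

end
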